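(* Suppose there exist $\bar\beta_1,\dots,\bar\beta_{m^*}\in\mathcal B^*$ and nonnegative constants $\mu_1,\dots,\mu_{m^*}$ with $\Pi^*\preceq\sum_{k=1}^{m^*}\mu_k\bar\beta_k\bar\beta_k^\top$, and set $\mu^*=\sum_k\mu_k$. If $\max_\ell|\hat\beta_\ell-\beta_\ell|\le\varepsilon$, then $$\operatorname{tr}\big((I-\widehat\Pi)\Pi^*\big)\le4\varepsilon^2\mu^*\quad\text{and}\quad\operatorname{tr}\big((\widehat\Pi-\Pi^* )^2\big)\le8\varepsilon^2\mu^*.$$
   Context: Let $\mathcal S$ be an $m^*$-dimensional linear subspace of $\mathbb R^d$ with orthogonal projector $\Pi^*$, let $\beta_1,\dots,\beta_L\in\mathcal S$, and let $\hat\beta_1,\dots,\hat\beta_L\in\mathbb R^d$ be arbitrary. $|\cdot|$ is the Euclidean norm, $I$ the $d\times d$ identity, $A\preceq B$ means $B-A$ is positive semidefinite. $\mathcal B^*=\{\sum_{\ell=1}^Lc_\ell\beta_\ell:\sum_\ell|c_\ell|\le1\}$. Let $\mathcal A_{m^*}=\{\Pi\in\mathbb R^{d\times d}:\Pi=\Pi^\top,\ 0\preceq\Pi\preceq I,\ \operatorname{tr}\Pi\le m^*\}$ and let $\widehat\Pi$ be a minimizer over $\Pi\in\mathcal A_{m^*}$ of $\max_\ell\hat\beta_\ell^\top(I-\Pi)\hat\beta_\ell$. *)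

theory Defs
  imports "HOL-Analysis.Analysis"
begin

definition loewner_le :: "real^'n^'n \<Rightarrow> real^'n^'n \<Rightarrow> bool" where
  "loewner_le A B \<longleftrightarrow> (\<forall>x::real^'n. 0 \<le> x \<bullet> ((B - A) *v x))"

definition outer :: "real^'n \<Rightarrow> real^'n \<Rightarrow> real^'n^'n" where
  "outer u v = (\<chi> i j. u $ i * v $ j)"

definition orth_projector :: "real^'n^'n \<Rightarrow> (real^'n) set \<Rightarrow> bool" where
  "orth_projector P S \<longleftrightarrow> transpose P = P \<and> P ** P = P \<and> range (\<lambda>x. P *v x) = S"

definition Bstar :: "(nat \<Rightarrow> real^'n) \<Rightarrow> nat \<Rightarrow> (real^'n) set" where
  "Bstar \<beta> L = {(\<Sum>l\<in>{1..L}. c l *\<^sub>R \<beta> l) | c. (\<Sum>l\<in>{1..L}. \<bar>c l\<bar>) \<le> 1}"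

definition Aset :: "nat \<Rightarrow> (real^'n^'n) set" where
  "Aset m = {P. transpose P = P \<and> loewner_le 0 P \<and> loewner_le P (mat 1) \<and> trace P \<le> real m}"

definition obj :: "(nat \<Rightarrow> real^'n) \<Rightarrow> nat \<Rightarrow> real^'n^'n \<Rightarrow> real" where
  "obj bh L P = Max ((\<lambda>l. bh l \<bullet> ((mat 1 - P) *v bh l)) ` {1..L})"

end

theory Submission
  imports Defs
begin

text \<open>
  Put A = I - Phat. The true projector Pstar is feasible, and since every \<beta> l lies in its range,
  its objective value is at most \<epsilon>^2; hence so is that of the minimiser Phat, i.e.
  x' A x \<le> \<epsilon>^2 for x = \<beta>h l. Because 0 \<preceq> A \<preceq> I, the map x \<mapsto> sqrt (x' A x) is a seminorm
  dominated by the Euclidean norm, so x' A x \<le> (2 \<epsilon>)^2 first for x = \<beta> l and then, by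
  convexity, for all x in B*. Testing Pstar \<preceq> \<Sum>k. \<mu> k \<beta>bar k \<beta>bar k' against A, which is
  legitimate since tr (A D) \<ge> 0 for positive semidefinite A and D, gives tr (A Pstar) \<le> 4 \<epsilon>^2 \<mu>*.
  Finally tr (Phat^2) \<le> tr Phat \<le> m = tr Pstar turns tr ((Phat - Pstar)^2) into at most
  2 tr (A Pstar).
\<close>

section \<open>Positive semidefinite quadratic forms\<close>

lemma loewner_le_iff: "loewner_le A B \<longleftrightarrow> (\<forall>x. x \<bullet> (A *v x) \<le> x \<bullet> (B *v x))"
  by (simp add: loewner_le_def matrix_vector_mult_diff_rdistrib inner_diff_right)

lemma loewner_le_0_iff: "loewner_le 0 A \<longleftrightarrow> (\<forall>x. 0 \<le> x \<bullet> (A *v x))"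
  by (simp add: loewner_le_iff)

lemma loewner_le_imp_0_diff: "loewner_le A B \<Longrightarrow> loewner_le 0 (B - A)"
  by (simp add: loewner_le_def)

lemma loewner_le_complement:
  assumes "loewner_le 0 A" and "loewner_le A (mat 1)"
  shows "loewner_le 0 (mat 1 - A)" and "loewner_le (mat 1 - A) (mat 1)"
  using assms by (auto simp: loewner_le_iff matrix_vector_mult_diff_rdistrib inner_diff_right)

lemma inner_axis_matrix_axis: "axis i 1 \<bullet> (A *v axis j 1) = (A $ i $ j :: real)"
  by (simp add: inner_axis' matrix_vector_mul_component inner_axis)

lemma symmetric_inner_commute:
  "transpose A = A \<Longrightarrow> x \<bullet> (A *v y) = y \<bullet> ((A :: real^'n^'n) *v x)"
  by (metis dot_lmul_matrix inner_commute vector_transpose_matrix)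

lemma quadratic_form_add:
  fixes A :: "real^'n^'n"
  assumes "transpose A = A"
  shows "(x + y) \<bullet> (A *v (x + y)) = x \<bullet> (A *v x) + 2 * (x \<bullet> (A *v y)) + y \<bullet> (A *v y)"
  using symmetric_inner_commute[OF assms, of y x]
  by (simp add: matrix_vector_right_distrib inner_add_left inner_add_right)

lemma quadratic_form_scaleR:
  "(c *\<^sub>R x) \<bullet> (A *v (c *\<^sub>R x)) = c\<^sup>2 * (x \<bullet> ((A :: real^'n^'n) *v x))"
  by (simp add: matrix_vector_mult_scaleR power2_eq_square)

lemma quadratic_nonneg_imp_discriminant_le:
  fixes a b c :: real
  assumes "0 \<le> a" and nonneg: "\<And>t. 0 \<le> a * t\<^sup>2 + 2 * b * t + c"
  shows "b\<^sup>2 \<le> a * c"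
proof (cases "a = 0")
  case True
  have "b = 0"
  proof (rule ccontr)
    assume "b \<noteq> 0"
    have "0 \<le> a * (-(c + 1) / (2 * b))\<^sup>2 + 2 * b * (-(c + 1) / (2 * b)) + c" by (rule nonneg)
    also have "\<dots> = -1" using True \<open>b \<noteq> 0\<close> by (simp add: field_simps)
    finally show False by simp
  qed
  with True show ?thesis by simp
next
  case False
  with \<open>0 \<le> a\<close> have "0 < a" by simp
  have "0 \<le> a * (-b / a)\<^sup>2 + 2 * b * (-b / a) + c" by (rule nonneg)
  also have "\<dots> = c - b\<^sup>2 / a" using \<open>0 < a\<close> by (simp add: field_simps power2_eq_square)
  finally show ?thesis using \<open>0 < a\<close> by (simp add: field_simps)
qed

lemma psd_Cauchy_Schwarz:
  fixes A :: "real^'n^'n"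
  assumes "transpose A = A" and "loewner_le 0 A"
  shows "(x \<bullet> (A *v y))\<^sup>2 \<le> (x \<bullet> (A *v x)) * (y \<bullet> (A *v y))"
proof (rule quadratic_nonneg_imp_discriminant_le)
  show "0 \<le> x \<bullet> (A *v x)" using assms(2) by (simp add: loewner_le_0_iff)
  fix t :: real
  have "0 \<le> (t *\<^sub>R x + y) \<bullet> (A *v (t *\<^sub>R x + y))" using assms(2) by (simp add: loewner_le_0_iff)
  also have "\<dots> = x \<bullet> (A *v x) * t\<^sup>2 + 2 * (x \<bullet> (A *v y)) * t + y \<bullet> (A *v y)"
    by (simp add: quadratic_form_add[OF assms(1)] quadratic_form_scaleR matrix_vector_mult_scaleR power2_eq_square)
  finally show "0 \<le> x \<bullet> (A *v x) * t\<^sup>2 + 2 * (x \<bullet> (A *v y)) * t + y \<bullet> (A *v y)" .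
qed

lemma psd_sqrt_form_triangle:
  fixes A :: "real^'n^'n"
  assumes "transpose A = A" and "loewner_le 0 A"
  shows "sqrt ((x + y) \<bullet> (A *v (x + y))) \<le> sqrt (x \<bullet> (A *v x)) + sqrt (y \<bullet> (A *v y))"
proof -
  define a b c where "a = x \<bullet> (A *v x)" and "b = x \<bullet> (A *v y)" and "c = y \<bullet> (A *v y)"
  have "0 \<le> a" "0 \<le> c" using assms(2) by (simp_all add: a_def c_def loewner_le_0_iff)
  have "b\<^sup>2 \<le> a * c" using psd_Cauchy_Schwarz[OF assms] by (simp add: a_def b_def c_def)
  hence "b \<le> sqrt a * sqrt c" by (metis real_le_rsqrt real_sqrt_mult)
  hence "a + 2 * b + c \<le> (sqrt a + sqrt c)\<^sup>2"
    using \<open>0 \<le> a\<close> \<open>0 \<le> c\<close> by (simp add: power2_eq_square algebra_simps)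
  hence "sqrt (a + 2 * b + c) \<le> sqrt a + sqrt c"
    using \<open>0 \<le> a\<close> \<open>0 \<le> c\<close> by (simp add: real_le_lsqrt)
  then show ?thesis by (simp add: quadratic_form_add[OF assms(1)] a_def b_def c_def)
qed

lemma psd_sqrt_form_sum:
  fixes A :: "real^'n^'n"
  assumes "transpose A = A" and "loewner_le 0 A"
  shows "sqrt ((\<Sum>l\<in>F. c l *\<^sub>R v l) \<bullet> (A *v (\<Sum>l\<in>F. c l *\<^sub>R v l)))
           \<le> (\<Sum>l\<in>F. \<bar>c l\<bar> * sqrt (v l \<bullet> (A *v v l)))"
proof (induction F rule: infinite_finite_induct)
  case (insert l F)
  let ?u = "\<Sum>l\<in>F. c l *\<^sub>R v l"
  have "sqrt ((c l *\<^sub>R v l + ?u) \<bullet> (A *v (c l *\<^sub>R v l + ?u)))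
          \<le> sqrt ((c l *\<^sub>R v l) \<bullet> (A *v (c l *\<^sub>R v l))) + sqrt (?u \<bullet> (A *v ?u))"
    by (rule psd_sqrt_form_triangle[OF assms])
  also have "sqrt ((c l *\<^sub>R v l) \<bullet> (A *v (c l *\<^sub>R v l))) = \<bar>c l\<bar> * sqrt (v l \<bullet> (A *v v l))"
    by (simp only: quadratic_form_scaleR real_sqrt_mult real_sqrt_abs)
  finally show ?case using insert by simp
qed auto

lemma sqrt_form_le_add_dist:
  fixes A :: "real^'n^'n"
  assumes "transpose A = A" and "loewner_le 0 A" and "loewner_le A (mat 1)"
  shows "sqrt (y \<bullet> (A *v y)) \<le> sqrt (x \<bullet> (A *v x)) + dist y x"
proof -
  have "sqrt ((y - x) \<bullet> (A *v (y - x))) \<le> sqrt ((y - x) \<bullet> (y - x))"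
    using assms(3) by (simp add: loewner_le_iff)
  also have "\<dots> = dist y x" by (simp add: dist_norm norm_eq_sqrt_inner)
  finally show ?thesis
    using psd_sqrt_form_triangle[OF assms(1,2), of x "y - x"] by simp
qed

lemma form_le_of_dist_le:
  fixes A :: "real^'n^'n"
  assumes "transpose A = A" and "loewner_le 0 A" and "loewner_le A (mat 1)"
    and "x \<bullet> (A *v x) \<le> r\<^sup>2" and "0 \<le> r" and "dist y x \<le> s"
  shows "y \<bullet> (A *v y) \<le> (r + s)\<^sup>2"
proof (rule sqrt_le_D)
  have "sqrt (x \<bullet> (A *v x)) \<le> r" using assms(4,5) by (simp add: real_le_lsqrt)
  then show "sqrt (y \<bullet> (A *v y)) \<le> r + s"
    using sqrt_form_le_add_dist[OF assms(1-3), of y x] assms(6) by linarith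
qed

section \<open>Outer products and traces\<close>

lemma outer_mult_vector: "outer u v *v x = (v \<bullet> x) *\<^sub>R (u :: real^'n)"
  by (simp add: vec_eq_iff outer_def matrix_vector_mult_def inner_vec_def sum_distrib_left mult_ac)

lemma transpose_outer: "transpose (outer u v) = outer v (u :: real^'n)"
  by (simp add: vec_eq_iff outer_def transpose_def mult_ac)

lemma outer_scaleR_scaleR: "outer (c *\<^sub>R u) (c *\<^sub>R u) = c\<^sup>2 *\<^sub>R outer u (u :: real^'n)"
  by (simp add: vec_eq_iff outer_def power2_eq_square mult_ac)

lemma trace_mult_outer: "trace (A ** outer u v) = v \<bullet> (A *v (u :: real^'n))"
  by (simp add: trace_def matrix_matrix_mult_def outer_def matrix_vector_mult_def inner_vec_def
      sum_distrib_left mult_ac)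

lemma trace_scaleR: "trace (c *\<^sub>R A) = c * trace (A :: real^'n^'n)"
  by (simp add: trace_def sum_distrib_left)

lemma trace_sum: "trace (\<Sum>k\<in>K. f k) = (\<Sum>k\<in>K. trace (f k :: real^'n^'n))"
  by (induction K rule: infinite_finite_induct) (auto simp: trace_add trace_0[unfolded mat_0])

lemma transpose_sum: "transpose (\<Sum>k\<in>K. f k) = (\<Sum>k\<in>K. transpose (f k :: real^'n^'n))"
  by (simp add: vec_eq_iff transpose_def)

lemma transpose_diff: "transpose (A - B) = transpose A - transpose (B :: real^'n^'n)"
  by (simp add: vec_eq_iff transpose_def)

lemma matrix_sum_ldistrib: "A ** (\<Sum>k\<in>K. f k) = (\<Sum>k\<in>K. A ** f k :: real^'n^'n)"
  by (induction K rule: infinite_finite_induct) (auto simp: matrix_add_ldistrib)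

lemma matrix_diff_ldistrib: "A ** (B - C) = A ** B - A ** (C :: real^'n^'n)"
  by (simp add: vec_eq_iff matrix_matrix_mult_def sum_subtractf algebra_simps)

lemma matrix_diff_rdistrib: "(A - B) ** C = A ** C - B ** (C :: real^'n^'n)"
  by (simp add: vec_eq_iff matrix_matrix_mult_def sum_subtractf algebra_simps)

lemma psd_diagonal_zero_imp_column_zero:
  fixes A :: "real^'n^'n"
  assumes "transpose A = A" and "loewner_le 0 A" and "A $ i $ i = 0"
  shows "A *v axis i 1 = 0"
proof -
  let ?w = "A *v axis i 1"
  have "(?w \<bullet> ?w)\<^sup>2 \<le> (?w \<bullet> (A *v ?w)) * A $ i $ i"
    using psd_Cauchy_Schwarz[OF assms(1,2), of ?w "axis i 1"] by (simp only: inner_axis_matrix_axis)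
  then show ?thesis using assms(3) by simp
qed

lemma psd_rank_one_deflation:
  fixes A :: "real^'n^'n"
  assumes sym: "transpose A = A" and psd: "loewner_le 0 A" and pos: "0 < A $ i $ i"
  obtains w where "transpose (A - outer w w) = A - outer w w" and "loewner_le 0 (A - outer w w)"
    and "(A - outer w w) $ i $ i = 0" and "\<And>j. (A - outer w w) $ j $ j \<le> A $ j $ j"
proof -
  define d where "d = A $ i $ i"
  define v where "v = A *v axis i 1"
  define w where "w = sqrt (1 / d) *\<^sub>R v"
  have ww: "outer w w = (1 / d) *\<^sub>R outer v v"
    using pos by (simp add: w_def d_def outer_scaleR_scaleR)
  have v: "v $ j = A $ j $ i" for j
    by (simp add: v_def matrix_vector_mul_component inner_axis)
  show ?thesis
  proof
    show "transpose (A - outer w w) = A - outer w w"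
      by (simp add: transpose_diff transpose_outer sym)
    show "loewner_le 0 (A - outer w w)"
      unfolding loewner_le_0_iff
    proof
      fix x
      have "(x \<bullet> v)\<^sup>2 \<le> (x \<bullet> (A *v x)) * d"
        using psd_Cauchy_Schwarz[OF sym psd, of x "axis i 1"]
        by (simp add: v_def d_def inner_axis_matrix_axis)
      then have "0 \<le> x \<bullet> (A *v x) - (x \<bullet> v)\<^sup>2 / d"
        using pos by (simp add: d_def field_simps)
      also have "\<dots> = x \<bullet> ((A - outer w w) *v x)"
        by (simp add: ww matrix_vector_mult_diff_rdistrib scaleR_matrix_vector_assoc[symmetric]
            outer_mult_vector inner_diff_right power2_eq_square inner_commute)
      finally show "0 \<le> x \<bullet> ((A - outer w w) *v x)" .
    qed
    show "(A - outer w w) $ i $ i = 0"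
      using pos unfolding ww by (simp add: outer_def v d_def power2_eq_square)
    show "(A - outer w w) $ j $ j \<le> A $ j $ j" for j
      using pos unfolding ww by (simp add: outer_def v d_def)
  qed
qed

lemma psd_eq_sum_list_outer:
  fixes A :: "real^'n^'n"
  assumes "transpose A = A" and "loewner_le 0 A"
  obtains ws where "A = (\<Sum>w\<leftarrow>ws. outer w w)"
proof -
  \<comment> \<open>Induction on a set of indices outside which the diagonal of A vanishes; each step is
    one Cholesky step, peeling off a rank-one term that clears one more diagonal entry.\<close>
  have "\<exists>ws. A = (\<Sum>w\<leftarrow>ws. outer w w)"
    if "finite I" "transpose A = A" "loewner_le 0 A" "\<And>j. j \<notin> I \<Longrightarrow> A $ j $ j = 0"
    for I and A :: "real^'n^'n"
    using that
  proof (induction I arbitrary: A rule: finite_induct)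
    case empty
    have "A $ j $ i = 0" for i j
      using psd_diagonal_zero_imp_column_zero[OF empty.prems(1,2)] empty.prems(3)
      by (metis empty_iff inner_axis_matrix_axis inner_zero_right)
    then have "A = 0" by (simp add: vec_eq_iff)
    then show ?case by (intro exI[of _ "[]"]) simp
  next
    case (insert i I)
    show ?case
    proof (cases "A $ i $ i = 0")
      case True
      then show ?thesis using insert by (metis insertE)
    next
      case False
      then have "0 < A $ i $ i"
        using insert.prems(2) by (simp add: loewner_le_0_iff order_neq_le_trans
            flip: inner_axis_matrix_axis)
      then obtain w where sym': "transpose (A - outer w w) = A - outer w w"
        and psd': "loewner_le 0 (A - outer w w)" and ii: "(A - outer w w) $ i $ i = 0"
        and jj: "\<And>j. (A - outer w w) $ j $ j \<le> A $ j $ j"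
        using psd_rank_one_deflation[OF insert.prems(1,2)] by blast
      have "(A - outer w w) $ j $ j = 0" if "j \<notin> I" for j
      proof (cases "j = i")
        case False
        have "0 \<le> (A - outer w w) $ j $ j"
          using psd' unfolding loewner_le_0_iff by (metis inner_axis_matrix_axis)
        with jj[of j] insert.prems(3)[of j] False that show ?thesis by simp
      qed (use ii in simp)
      then obtain ws where "A - outer w w = (\<Sum>w\<leftarrow>ws. outer w w)"
        using insert.IH sym' psd' by blast
      then show ?thesis by (intro exI[of _ "w # ws"]) (simp add: algebra_simps)
    qed
  qed
  from this[of UNIV] assms that show ?thesis by auto
qed

lemma trace_mult_psd_nonneg:
  fixes A B :: "real^'n^'n"
  assumes "loewner_le 0 A" and "transpose B = B" and "loewner_le 0 B"
  shows "0 \<le> trace (A ** B)"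
proof -
  obtain ws where B: "B = (\<Sum>w\<leftarrow>ws. outer w w)"
    using psd_eq_sum_list_outer[OF assms(2,3)] .
  have "trace (A ** (\<Sum>w\<leftarrow>ws. outer w w)) = (\<Sum>w\<leftarrow>ws. w \<bullet> (A *v w))"
    by (induction ws) (simp_all add: matrix_add_ldistrib trace_add trace_mult_outer trace_0[unfolded mat_0])
  also have "\<dots> \<ge> 0"
    using assms(1) by (intro sum_list_nonneg) (auto simp: loewner_le_0_iff)
  finally show ?thesis by (simp add: B)
qed

lemma trace_mult_loewner_mono:
  fixes A B C :: "real^'n^'n"
  assumes "loewner_le 0 A" and "transpose B = B" and "transpose C = C" and "loewner_le B C"
  shows "trace (A ** B) \<le> trace (A ** C)"
proof -
  have "0 \<le> trace (A ** (C - B))"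
    using assms by (intro trace_mult_psd_nonneg) (simp_all add: transpose_diff loewner_le_imp_0_diff)
  then show ?thesis by (simp add: matrix_diff_ldistrib trace_sub)
qed

lemma trace_mult_le_of_loewner_le_sum_outer:
  fixes A P :: "real^'n^'n"
  assumes "loewner_le 0 A" and "transpose P = P"
    and "loewner_le P (\<Sum>k\<in>K. \<mu> k *\<^sub>R outer (v k) (v k))"
    and "\<And>k. k \<in> K \<Longrightarrow> 0 \<le> \<mu> k" and "\<And>k. k \<in> K \<Longrightarrow> v k \<bullet> (A *v v k) \<le> r"
  shows "trace (A ** P) \<le> r * (\<Sum>k\<in>K. \<mu> k)"
proof -
  have "trace (A ** P) \<le> trace (A ** (\<Sum>k\<in>K. \<mu> k *\<^sub>R outer (v k) (v k)))"
    using assms(1-3) by (intro trace_mult_loewner_mono)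
      (simp_all add: transpose_sum transpose_scalar transpose_outer)
  also have "\<dots> = (\<Sum>k\<in>K. \<mu> k * (v k \<bullet> (A *v v k)))"
    by (simp add: matrix_sum_ldistrib trace_sum matrix_scalar_ac scalar_matrix_assoc[symmetric]
        trace_scaleR trace_mult_outer)
  also have "\<dots> \<le> r * (\<Sum>k\<in>K. \<mu> k)"
    unfolding sum_distrib_left using assms(4,5)
    by (intro sum_mono) (simp add: mult.commute[of r] mult_left_mono)
  finally show ?thesis .
qed

section \<open>Orthogonal projectors\<close>

lemma orth_projector_fixes:
  assumes "orth_projector P S" and "x \<in> S"
  shows "P *v x = x"
proof -
  from assms obtain y where "x = P *v y" by (auto simp: orth_projector_def)
  with assms(1) show ?thesis by (simp add: orth_projector_def matrix_vector_mul_assoc)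
qed

lemma orth_projector_form:
  assumes "orth_projector P S"
  shows "x \<bullet> (P *v x) = (P *v x) \<bullet> (P *v x)"
proof -
  have "x \<bullet> (P *v x) = x \<bullet> (P *v (P *v x))"
    using assms by (simp add: orth_projector_def matrix_vector_mul_assoc)
  also have "\<dots> = (P *v x) \<bullet> (P *v x)"
    using assms by (simp add: orth_projector_def symmetric_inner_commute[of P x])
  finally show ?thesis .
qed

lemma orth_projector_loewner:
  assumes "orth_projector P S"
  shows "loewner_le 0 P" and "loewner_le P (mat 1)"
proof -
  have "(x - P *v x) \<bullet> (x - P *v x) = x \<bullet> x - x \<bullet> (P *v x)" for x
    using orth_projector_form[OF assms, of x] by (simp add: inner_diff inner_commute)
  then show "loewner_le P (mat 1)"
    by (simp add: loewner_le_iff) (metis diff_ge_0_iff_ge inner_ge_zero)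
  show "loewner_le 0 P"
    by (simp add: loewner_le_0_iff orth_projector_form[OF assms])
qed

lemma orth_projector_expansion:
  assumes P: "orth_projector P S" and B: "pairwise orthogonal B" "\<And>b. b \<in> B \<Longrightarrow> norm b = 1"
    "span B = S"
  shows "P *v x = (\<Sum>b\<in>B. (b \<bullet> x) *\<^sub>R b)"
proof -
  define p where "p = (\<Sum>b\<in>B. (b \<bullet> x) *\<^sub>R b)"
  have "p \<in> S" unfolding p_def B(3)[symmetric] by (intro span_sum span_scale span_base)
  have "b \<bullet> b = 1" if "b \<in> B" for b using B(2)[OF that] by (simp add: norm_eq_1)
  then have p: "p = (\<Sum>b\<in>B. (b \<bullet> x / (b \<bullet> b)) *\<^sub>R b)" by (simp add: p_def)
  have "P *v (x - p) \<in> S" using P by (auto simp: orth_projector_def)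
  then have "orthogonal (P *v (x - p)) (x - p)"
    unfolding p B(3)[symmetric] by (rule Gram_Schmidt_step[OF B(1)])
  then have "P *v (x - p) = 0"
    using orth_projector_form[OF P, of "x - p"] by (simp add: orthogonal_def inner_commute)
  then show ?thesis
    using orth_projector_fixes[OF P \<open>p \<in> S\<close>] by (simp add: p_def matrix_vector_mult_diff_distrib)
qed

lemma trace_orth_projector:
  assumes "subspace S" and "orth_projector P S"
  shows "trace P = real (dim S)"
proof -
  obtain B where B: "pairwise orthogonal B" "\<And>b. b \<in> B \<Longrightarrow> norm b = 1"
    "card B = dim S" "span B = S"
    using orthonormal_basis_subspace[OF assms(1)] by metis
  have "trace P = (\<Sum>i\<in>UNIV. axis i 1 \<bullet> (P *v axis i 1))"
    by (simp add: trace_def inner_axis_matrix_axis)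
  also have "\<dots> = (\<Sum>i\<in>UNIV. \<Sum>b\<in>B. b $ i * b $ i)"
    by (simp add: orth_projector_expansion[OF assms(2) B(1,2,4)] inner_sum_right inner_axis inner_axis')
  also have "\<dots> = (\<Sum>b\<in>B. b \<bullet> b)"
    by (subst sum.swap) (simp add: inner_vec_def)
  also have "\<dots> = card B"
    using B(2) by (simp add: norm_eq_1)
  finally show ?thesis using B(3) by simp
qed

lemma orth_projector_in_Aset:
  assumes "subspace S" and "orth_projector P S"
  shows "P \<in> Aset (dim S)"
  using assms orth_projector_loewner[OF assms(2)] trace_orth_projector[OF assms]
  by (simp add: Aset_def orth_projector_def)

section \<open>The subspace estimation problem\<close>

lemma psd_form_Bstar_le:
  fixes A :: "real^'n^'n"
  assumes "transpose A = A" and "loewner_le 0 A" and "x \<in> Bstar \<beta> L" and "0 \<le> r"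
    and "\<And>l. l \<in> {1..L} \<Longrightarrow> \<beta> l \<bullet> (A *v \<beta> l) \<le> r\<^sup>2"
  shows "x \<bullet> (A *v x) \<le> r\<^sup>2"
proof -
  obtain c where x: "x = (\<Sum>l\<in>{1..L}. c l *\<^sub>R \<beta> l)" and c: "(\<Sum>l\<in>{1..L}. \<bar>c l\<bar>) \<le> 1"
    using assms(3) unfolding Bstar_def by blast
  have "sqrt (x \<bullet> (A *v x)) \<le> (\<Sum>l\<in>{1..L}. \<bar>c l\<bar> * sqrt (\<beta> l \<bullet> (A *v \<beta> l)))"
    unfolding x by (rule psd_sqrt_form_sum[OF assms(1,2)])
  also have "\<dots> \<le> (\<Sum>l\<in>{1..L}. \<bar>c l\<bar> * r)"
    using assms(4,5) by (intro sum_mono mult_left_mono real_le_lsqrt) auto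
  also have "\<dots> \<le> r"
    using c \<open>0 \<le> r\<close> by (simp add: sum_distrib_right[symmetric] mult_left_le_one_le)
  finally show ?thesis by (rule sqrt_le_D)
qed

lemma Aset_complement:
  assumes "P \<in> Aset m"
  shows "transpose (mat 1 - P) = mat 1 - P" and "loewner_le 0 (mat 1 - P)"
    and "loewner_le (mat 1 - P) (mat 1)"
  using assms loewner_le_complement[of P] by (auto simp: Aset_def transpose_diff)

lemma obj_le_iff:
  assumes "1 \<le> L"
  shows "obj \<beta>h L P \<le> r \<longleftrightarrow> (\<forall>l\<in>{1..L}. \<beta>h l \<bullet> ((mat 1 - P) *v \<beta>h l) \<le> r)"
  unfolding obj_def using assms by (subst Max_le_iff) auto

lemma obj_orth_projector_le:
  assumes "orth_projector P S" and "1 \<le> L" and "\<forall>l\<in>{1..L}. \<beta> l \<in> S"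
    and "\<forall>l\<in>{1..L}. norm (\<beta>h l - \<beta> l) \<le> \<epsilon>"
  shows "obj \<beta>h L P \<le> \<epsilon>\<^sup>2"
  unfolding obj_le_iff[OF assms(2)]
proof
  fix l assume l: "l \<in> {1..L}"
  have A: "transpose (mat 1 - P) = mat 1 - P" "loewner_le 0 (mat 1 - P)" "loewner_le (mat 1 - P) (mat 1)"
    using assms(1) orth_projector_loewner[OF assms(1)] loewner_le_complement
    by (simp_all add: orth_projector_def transpose_diff)
  have "(mat 1 - P) *v \<beta> l = 0"
    using orth_projector_fixes[OF assms(1)] assms(3) l by (simp add: matrix_vector_mult_diff_rdistrib)
  then have "\<beta> l \<bullet> ((mat 1 - P) *v \<beta> l) \<le> 0\<^sup>2" by simp
  moreover have "dist (\<beta>h l) (\<beta> l) \<le> \<epsilon>" using assms(4) l by (simp add: dist_norm)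
  ultimately show "\<beta>h l \<bullet> ((mat 1 - P) *v \<beta>h l) \<le> \<epsilon>\<^sup>2"
    using form_le_of_dist_le[OF A] by fastforce
qed

lemma obj_le_imp_form_le:
  assumes "P \<in> Aset m" and "1 \<le> L" and "obj \<beta>h L P \<le> \<epsilon>\<^sup>2" and "0 \<le> \<epsilon>"
    and "\<forall>l\<in>{1..L}. norm (\<beta>h l - \<beta> l) \<le> \<epsilon>" and "l \<in> {1..L}"
  shows "\<beta> l \<bullet> ((mat 1 - P) *v \<beta> l) \<le> (2 * \<epsilon>)\<^sup>2"
proof -
  have "\<beta>h l \<bullet> ((mat 1 - P) *v \<beta>h l) \<le> \<epsilon>\<^sup>2"
    using assms(3,6) obj_le_iff[OF assms(2)] by blast
  moreover have "dist (\<beta> l) (\<beta>h l) \<le> \<epsilon>"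
    using assms(5,6) by (simp add: dist_norm norm_minus_commute)
  ultimately show ?thesis
    using form_le_of_dist_le[OF Aset_complement[OF assms(1)] _ assms(4)] by (metis mult_2)
qed

lemma trace_square_diff_le:
  fixes Q P :: "real^'n^'n"
  assumes "transpose Q = Q" and "loewner_le 0 Q" and "loewner_le Q (mat 1)"
    and "transpose P = P" and "P ** P = P" and "trace Q \<le> trace P"
  shows "trace ((Q - P) ** (Q - P)) \<le> 2 * trace ((mat 1 - Q) ** P)"
proof -
  have "0 \<le> trace (Q ** (mat 1 - Q))"
    using assms(1-3) loewner_le_complement
    by (intro trace_mult_psd_nonneg) (simp_all add: transpose_diff)
  then have "trace (Q ** Q) \<le> trace Q" by (simp add: matrix_diff_ldistrib trace_sub)
  then show ?thesis
    using assms(5,6) trace_mul_sym[of P Q]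
    by (simp add: matrix_diff_ldistrib matrix_diff_rdistrib trace_sub)
qed

theorem proposition5:
  fixes S :: "(real^'n) set" and m :: nat and Pstar :: "real^'n^'n"
    and L :: nat and \<beta> \<beta>h :: "nat \<Rightarrow> real^'n" and Phat :: "real^'n^'n"
    and \<beta>bar :: "nat \<Rightarrow> real^'n" and \<mu> :: "nat \<Rightarrow> real" and \<epsilon> :: real
  assumes "subspace S" and "dim S = m"
    and "orth_projector Pstar S"
    and "L \<ge> 1"
    and "\<forall>l\<in>{1..L}. \<beta> l \<in> S"
    and "Phat \<in> Aset m"
    and "\<forall>P\<in>Aset m. obj \<beta>h L Phat \<le> obj \<beta>h L P"
    and "\<forall>k\<in>{1..m}. \<beta>bar k \<in> Bstar \<beta> L"
    and "\<forall>k\<in>{1..m}. 0 \<le> \<mu> k"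
    and "loewner_le Pstar (\<Sum>k\<in>{1..m}. \<mu> k *\<^sub>R outer (\<beta>bar k) (\<beta>bar k))"
    and "\<forall>l\<in>{1..L}. norm (\<beta>h l - \<beta> l) \<le> \<epsilon>"
  shows "trace ((mat 1 - Phat) ** Pstar) \<le> 4 * \<epsilon>\<^sup>2 * (\<Sum>k\<in>{1..m}. \<mu> k)
         \<and> trace ((Phat - Pstar) ** (Phat - Pstar)) \<le> 8 * \<epsilon>\<^sup>2 * (\<Sum>k\<in>{1..m}. \<mu> k)"
proof -
  have "0 \<le> \<epsilon>" using assms(4,11) by (meson atLeastAtMost_iff norm_ge_zero order_refl order_trans)
  have "Pstar \<in> Aset m" using orth_projector_in_Aset[OF assms(1,3)] assms(2) by simp
  then have "obj \<beta>h L Phat \<le> \<epsilon>\<^sup>2"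
    using assms(7) obj_orth_projector_le[OF assms(3,4,5,11)] by fastforce
  then have "\<beta> l \<bullet> ((mat 1 - Phat) *v \<beta> l) \<le> (2 * \<epsilon>)\<^sup>2" if "l \<in> {1..L}" for l
    using obj_le_imp_form_le[OF assms(6,4) _ \<open>0 \<le> \<epsilon>\<close> assms(11) that] by blast
  then have "\<beta>bar k \<bullet> ((mat 1 - Phat) *v \<beta>bar k) \<le> 4 * \<epsilon>\<^sup>2" if "k \<in> {1..m}" for k
    using psd_form_Bstar_le[OF Aset_complement(1,2)[OF assms(6)], of "\<beta>bar k" \<beta> L "2 * \<epsilon>"]
      assms(8) that \<open>0 \<le> \<epsilon>\<close>
    by (simp add: power_mult_distrib)
  then have "trace ((mat 1 - Phat) ** Pstar) \<le> 4 * \<epsilon>\<^sup>2 * (\<Sum>k\<in>{1..m}. \<mu> k)"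
    using assms(3,9,10) Aset_complement(2)[OF assms(6)]
    by (intro trace_mult_le_of_loewner_le_sum_outer) (auto simp: orth_projector_def)
  moreover have "trace ((Phat - Pstar) ** (Phat - Pstar)) \<le> 2 * trace ((mat 1 - Phat) ** Pstar)"
    using assms(2,3,6) trace_orth_projector[OF assms(1,3)]
    by (intro trace_square_diff_le) (simp_all add: Aset_def orth_projector_def)
  ultimately show ?thesis by simp
qed

end
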